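(* Let $\Omega\subset\mathbb{R}^n$ be a domain, $\mathcal{S}$ any basis of shapes in $\Omega$, $1\le p<\infty$, and $f$ a real-valued function in $\mathrm{BMO}^p_{\mathcal{S}}(\Omega)$. Then for all $k>0$, $T(f,k)\in\mathrm{BMO}^p_{\mathcal{S}}(\Omega)$ and $\|T(f,k)\|_{\mathrm{BMO}^p_{\mathcal{S}}}\le c\|f\|_{\mathrm{BMO}^p_{\mathcal{S}}}$, where $c=1$ if $p=1$ or $p=2$, and $c=\min\big(2,\big(\frac{1+c_{|\cdot|}(p,\mathcal{S})}{2}\big)^2\big)$ otherwise. Moreover, for $p=1$ or $p=2$, $\|T(f,k)\|_{\mathrm{BMO}^p_{\mathcal{S}}}\to\|f\|_{\mathrm{BMO}^p_{\mathcal{S}}}$ as $k\to\infty$.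
   Context: A domain is an open connected set. A shape is an open set with $0<|S|<\infty$; a basis of shapes in $\Omega$ is a collection of shapes contained in $\Omega$ covering $\Omega$. For $f\in L^1(S)$, $f_S=\frac1{|S|}\int_Sf$. $\mathrm{BMO}^p_{\mathcal{S}}(\Omega)$ is the space of $f$ with $f\in L^1(S)$ for all $S\in\mathcal{S}$ and $\|f\|_{\mathrm{BMO}^p_{\mathcal{S}}}:=\sup_{S\in\mathcal{S}}\big(\frac1{|S|}\int_S|f-f_S|^p\big)^{1/p}<\infty$. $c_{|\cdot|}(p,\mathcal{S})$ denotes the smallest constant $c$ such that $\||f|\|_{\mathrm{BMO}^p_{\mathcal{S}}}\le c\|f\|_{\mathrm{BMO}^p_{\mathcal{S}}}$ for all real-valued $f\in\mathrm{BMO}^p_{\mathcal{S}}(\Omega)$ (known to satisfy $1\le c_{|\cdot|}(p,\mathcal{S})\le2$). The truncation at level $k$ is $T(f,k)(x)=k$ if $f(x)>k$, $=f(x)$ if $-k\le f(x)\le k$, $=-k$ if $f(x)<-k$. *)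

theory Defs
  imports "HOL-Analysis.Analysis"
begin

definition domain :: "'a::euclidean_space set \<Rightarrow> bool" where
  "domain \<Omega> \<longleftrightarrow> open \<Omega> \<and> connected \<Omega> \<and> \<Omega> \<noteq> {}"

definition shape :: "'a::euclidean_space set \<Rightarrow> bool" where
  "shape S \<longleftrightarrow> open S \<and> 0 < emeasure lebesgue S \<and> emeasure lebesgue S < \<infinity>"

definition basis_of_shapes :: "'a::euclidean_space set set \<Rightarrow> 'a set \<Rightarrow> bool" where
  "basis_of_shapes \<S> \<Omega> \<longleftrightarrow> (\<forall>S\<in>\<S>. shape S \<and> S \<subseteq> \<Omega>) \<and> \<Union>\<S> = \<Omega>"

definition avg :: "'a::euclidean_space set \<Rightarrow> ('a \<Rightarrow> real) \<Rightarrow> real" where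
  "avg S f = (1 / measure lebesgue S) * (LINT x:S|lebesgue. f x)"

definition osc :: "real \<Rightarrow> 'a::euclidean_space set \<Rightarrow> ('a \<Rightarrow> real) \<Rightarrow> real" where
  "osc p S f = ((1 / measure lebesgue S) *
      (LINT x:S|lebesgue. \<bar>f x - avg S f\<bar> powr p)) powr (1 / p)"

definition in_BMO :: "real \<Rightarrow> 'a::euclidean_space set set \<Rightarrow> ('a \<Rightarrow> real) \<Rightarrow> bool" where
  "in_BMO p \<S> f \<longleftrightarrow>
     (\<forall>S\<in>\<S>. set_integrable lebesgue S f \<and>
              set_integrable lebesgue S (\<lambda>x. \<bar>f x - avg S f\<bar> powr p)) \<and>
     bdd_above ((\<lambda>S. osc p S f) ` \<S>)"

definition BMO_norm :: "real \<Rightarrow> 'a::euclidean_space set set \<Rightarrow> ('a \<Rightarrow> real) \<Rightarrow> real" where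
  "BMO_norm p \<S> f = (SUP S\<in>\<S>. osc p S f)"

definition c_abs :: "real \<Rightarrow> 'a::euclidean_space set set \<Rightarrow> real" where
  "c_abs p \<S> = Inf {c. \<forall>f. in_BMO p \<S> f \<longrightarrow>
       in_BMO p \<S> (\<lambda>x. \<bar>f x\<bar>) \<and> BMO_norm p \<S> (\<lambda>x. \<bar>f x\<bar>) \<le> c * BMO_norm p \<S> f}"

definition trunc :: "('a \<Rightarrow> real) \<Rightarrow> real \<Rightarrow> 'a \<Rightarrow> real" where
  "trunc f k x = (if f x > k then k else if f x < - k then - k else f x)"

end

theory Submission
  imports Defs
begin

text \<open>Averages over a shape \<open>S\<close> are taken with respect to normalized Lebesgue measure
  on \<open>S\<close>. The mean oscillation \<open>||g - g_S||_p\<close> is then a seminorm (Minkowski), invariant under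
  adding constants, and \<open>||g - g_S||_p \<le> 2 ||g - c||_p\<close> for every constant \<open>c\<close> (Jensen).
  As \<open>T(-,k)\<close> is 1-Lipschitz, taking \<open>c = T(f_S,k)\<close> gives the factor 2; writing
  \<open>T(f,k) = (\<bar>f + k\<bar> - \<bar>f - k\<bar>) / 2\<close> gives the factor \<open>c_abs\<close>, and
  \<open>c_abs \<le> ((1 + c_abs) / 2)\<^sup>2\<close>. For \<open>p = 2\<close> the factor 2 disappears because the mean is the
  best constant approximation in \<open>L\<^sup>2\<close>; for \<open>p = 1\<close> because \<open>||g - g_S||_1\<close> is twice the
  average of \<open>max 0 (g_S - g)\<close>, which does not increase when \<open>g\<close> is cut off at a level.
  Finally \<open>T(f,k) \<rightarrow> f\<close> in \<open>L\<^sup>p(S)\<close> by dominated convergence, so on a shape where the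
  oscillation of \<open>f\<close> is nearly maximal, that of \<open>T(f,k)\<close> eventually is too.\<close>

section \<open>Inequalities for real powers\<close>

lemma powr_ge_tangent:
  fixes m t p :: real
  assumes "0 < m" and "0 \<le> t" and "1 \<le> p"
  shows "m powr p + p * m powr (p - 1) * (t - m) \<le> t powr p"
proof (cases "t = 0")
  case True
  have "m powr (p - 1) * m = m powr p"
    using powr_mult_base[of m "p - 1"] \<open>0 < m\<close> by (simp add: mult.commute)
  then have "m powr p + p * m powr (p - 1) * (t - m) = (1 - p) * m powr p"
    using True by (simp add: algebra_simps)
  also have "\<dots> \<le> 0"
    using \<open>1 \<le> p\<close> by (simp add: mult_nonpos_nonneg)
  finally show ?thesis
    using True by simp
next
  case False
  have "p * m powr (p - 1) * (t - m) \<le> t powr p - m powr p"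
    using assms False
    by (intro convex_on_imp_above_tangent[where A = "{0<..}"] powr_convex)
       (auto intro!: derivative_eq_intros simp: interior_open)
  then show ?thesis
    by simp
qed

lemma abs_convex_comb_powr_le:
  fixes a b l p :: real
  assumes "0 \<le> l" and "l \<le> 1" and "1 \<le> p"
  shows "\<bar>l * a + (1 - l) * b\<bar> powr p \<le> l * \<bar>a\<bar> powr p + (1 - l) * \<bar>b\<bar> powr p"
proof -
  define m where "m = l * \<bar>a\<bar> + (1 - l) * \<bar>b\<bar>"
  have "\<bar>l * a + (1 - l) * b\<bar> \<le> m"
    unfolding m_def using assms abs_triangle_ineq[of "l * a" "(1 - l) * b"]
    by (simp add: abs_mult)
  then have "\<bar>l * a + (1 - l) * b\<bar> powr p \<le> m powr p"
    using assms by (intro powr_mono2) auto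
  moreover have "m powr p \<le> l * \<bar>a\<bar> powr p + (1 - l) * \<bar>b\<bar> powr p"
  proof (cases "m = 0")
    case False
    then have "0 < m"
      using assms by (simp add: m_def order_le_neq_trans)
    define d where "d = p * m powr (p - 1)"
    have "l * (m powr p + d * (\<bar>a\<bar> - m)) + (1 - l) * (m powr p + d * (\<bar>b\<bar> - m))
        \<le> l * \<bar>a\<bar> powr p + (1 - l) * \<bar>b\<bar> powr p"
      unfolding d_def using assms \<open>0 < m\<close>
      by (intro add_mono mult_left_mono powr_ge_tangent) auto
    moreover have "l * (m powr p + d * (\<bar>a\<bar> - m)) + (1 - l) * (m powr p + d * (\<bar>b\<bar> - m))
        = m powr p"
      by (simp add: m_def algebra_simps)
    ultimately show ?thesis
      by simp
  qed (use assms in simp)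
  ultimately show ?thesis
    by linarith
qed

lemma abs_le_one_plus_abs_powr:
  fixes t p :: real
  assumes "1 \<le> p"
  shows "\<bar>t\<bar> \<le> 1 + \<bar>t\<bar> powr p"
proof (cases "\<bar>t\<bar> \<le> 1")
  case False
  then have "\<bar>t\<bar> powr 1 \<le> \<bar>t\<bar> powr p"
    using assms by (intro powr_mono) auto
  then show ?thesis
    using False by simp
qed (use powr_ge_zero[of "\<bar>t\<bar>" p] in linarith)

section \<open>Normalized \<open>L\<^sup>p\<close> norms and mean oscillation\<close>

definition mean :: "'a measure \<Rightarrow> ('a \<Rightarrow> real) \<Rightarrow> real" where
  "mean M g = integral\<^sup>L M g / measure M (space M)"

definition in_Lp :: "'a measure \<Rightarrow> real \<Rightarrow> ('a \<Rightarrow> real) \<Rightarrow> bool" where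
  "in_Lp M p g \<longleftrightarrow> g \<in> borel_measurable M \<and> integrable M (\<lambda>x. \<bar>g x\<bar> powr p)"

definition Lp_norm :: "'a measure \<Rightarrow> real \<Rightarrow> ('a \<Rightarrow> real) \<Rightarrow> real" where
  "Lp_norm M p g = mean M (\<lambda>x. \<bar>g x\<bar> powr p) powr (1 / p)"

definition mean_osc :: "'a measure \<Rightarrow> real \<Rightarrow> ('a \<Rightarrow> real) \<Rightarrow> real" where
  "mean_osc M p g = Lp_norm M p (\<lambda>x. g x - mean M g)"

locale mean_Lp_space = finite_measure M for M :: "'a measure" +
  fixes p :: real
  assumes space_measure_pos: "0 < measure M (space M)"
    and one_le_p: "1 \<le> p"
begin

lemma mean_const [simp]: "mean M (\<lambda>x. c) = c"
  using space_measure_pos by (simp add: mean_def)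

lemma mean_add:
  "integrable M g \<Longrightarrow> integrable M h \<Longrightarrow> mean M (\<lambda>x. g x + h x) = mean M g + mean M h"
  by (simp add: mean_def add_divide_distrib)

lemma mean_diff:
  "integrable M g \<Longrightarrow> integrable M h \<Longrightarrow> mean M (\<lambda>x. g x - h x) = mean M g - mean M h"
  by (simp add: mean_def diff_divide_distrib)

lemma mean_cmult: "mean M (\<lambda>x. c * g x) = c * mean M g"
  by (simp add: mean_def)

lemma mean_mono:
  assumes "integrable M g" and "integrable M h" and "\<And>x. x \<in> space M \<Longrightarrow> g x \<le> h x"
  shows "mean M g \<le> mean M h"
  unfolding mean_def using assms space_measure_pos
  by (intro divide_right_mono integral_mono) auto

lemma mean_nonneg: "(\<And>x. x \<in> space M \<Longrightarrow> 0 \<le> g x) \<Longrightarrow> 0 \<le> mean M g"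
  unfolding mean_def using space_measure_pos
  by (intro divide_nonneg_pos integral_nonneg_AE) auto

lemma abs_mean_le: "\<bar>mean M g\<bar> \<le> mean M (\<lambda>x. \<bar>g x\<bar>)"
  unfolding mean_def using space_measure_pos integral_abs_bound[of M g]
  by (simp add: abs_divide divide_right_mono)

lemma Lp_norm_nonneg: "0 \<le> Lp_norm M p g"
  by (simp add: Lp_norm_def)

lemma Lp_norm_powr: "Lp_norm M p g powr p = mean M (\<lambda>x. \<bar>g x\<bar> powr p)"
  unfolding Lp_norm_def using mean_nonneg[of "\<lambda>x. \<bar>g x\<bar> powr p"] one_le_p
  by (simp add: powr_powr)

lemma Lp_norm_le_iff:
  assumes "0 \<le> a"
  shows "Lp_norm M p g \<le> a \<longleftrightarrow> mean M (\<lambda>x. \<bar>g x\<bar> powr p) \<le> a powr p"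
proof
  assume "Lp_norm M p g \<le> a"
  then show "mean M (\<lambda>x. \<bar>g x\<bar> powr p) \<le> a powr p"
    unfolding Lp_norm_powr[symmetric] using Lp_norm_nonneg one_le_p by (intro powr_mono2) auto
next
  assume "mean M (\<lambda>x. \<bar>g x\<bar> powr p) \<le> a powr p"
  then have "Lp_norm M p g \<le> (a powr p) powr (1 / p)"
    unfolding Lp_norm_def using mean_nonneg[of "\<lambda>x. \<bar>g x\<bar> powr p"] one_le_p
    by (intro powr_mono2) auto
  then show "Lp_norm M p g \<le> a"
    using assms one_le_p by (simp add: powr_powr)
qed

lemma Lp_norm_1: "Lp_norm M 1 g = mean M (\<lambda>x. \<bar>g x\<bar>)"
  unfolding Lp_norm_def using mean_nonneg[of "\<lambda>x. \<bar>g x\<bar>"] by simp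

lemma in_Lp_integrable: "in_Lp M p g \<Longrightarrow> integrable M g"
  unfolding in_Lp_def using abs_le_one_plus_abs_powr[OF one_le_p]
  by (auto intro: Bochner_Integration.integrable_bound[of _ "\<lambda>x. 1 + \<bar>g x\<bar> powr p"])

lemma in_Lp_powr_integrable: "in_Lp M p g \<Longrightarrow> integrable M (\<lambda>x. \<bar>g x\<bar> powr p)"
  by (simp add: in_Lp_def)

lemma in_Lp_bound:
  assumes "in_Lp M p h" and "g \<in> borel_measurable M"
    and "\<And>x. x \<in> space M \<Longrightarrow> \<bar>g x\<bar> \<le> \<bar>h x\<bar>"
  shows "in_Lp M p g"
  unfolding in_Lp_def
proof
  show "integrable M (\<lambda>x. \<bar>g x\<bar> powr p)"
    by (rule Bochner_Integration.integrable_bound[of _ "\<lambda>x. \<bar>h x\<bar> powr p"])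
       (use assms one_le_p in \<open>auto intro!: AE_I2 powr_mono2 simp: in_Lp_def\<close>)
qed (fact assms(2))

lemma Lp_norm_mono:
  assumes "in_Lp M p h" and "g \<in> borel_measurable M"
    and "\<And>x. x \<in> space M \<Longrightarrow> \<bar>g x\<bar> \<le> \<bar>h x\<bar>"
  shows "Lp_norm M p g \<le> Lp_norm M p h"
  unfolding Lp_norm_le_iff[OF Lp_norm_nonneg] Lp_norm_powr
  using assms in_Lp_bound[OF assms] one_le_p
  by (intro mean_mono) (auto intro: powr_mono2 simp: in_Lp_def)

lemma in_Lp_const: "in_Lp M p (\<lambda>x. c)"
  by (simp add: in_Lp_def)

lemma Lp_norm_const: "Lp_norm M p (\<lambda>x. c) = \<bar>c\<bar>"
  unfolding Lp_norm_def using one_le_p by (simp add: powr_powr)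

lemma in_Lp_cmult: "in_Lp M p g \<Longrightarrow> in_Lp M p (\<lambda>x. c * g x)"
  by (auto simp: in_Lp_def abs_mult powr_mult)

lemma Lp_norm_cmult: "Lp_norm M p (\<lambda>x. c * g x) = \<bar>c\<bar> * Lp_norm M p g"
  unfolding Lp_norm_def using mean_nonneg[of "\<lambda>x. \<bar>g x\<bar> powr p"] one_le_p
  by (simp add: abs_mult powr_mult mean_cmult powr_powr)

lemma in_Lp_add:
  assumes g: "in_Lp M p g" and h: "in_Lp M p h"
  shows "in_Lp M p (\<lambda>x. g x + h x)"
proof -
  have "\<bar>g x + h x\<bar> powr p = 2 powr p * \<bar>(1/2) * g x + (1 - 1/2) * h x\<bar> powr p" for x
    by (simp flip: powr_mult add: abs_mult field_simps)
  also have "\<dots> x \<le> 2 powr p * ((1/2) * \<bar>g x\<bar> powr p + (1 - 1/2) * \<bar>h x\<bar> powr p)" for x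
    using one_le_p by (intro mult_left_mono abs_convex_comb_powr_le) auto
  finally show ?thesis
    using g h unfolding in_Lp_def
    by (auto intro: Bochner_Integration.integrable_bound[of _
          "\<lambda>x. 2 powr p * ((1/2) * \<bar>g x\<bar> powr p + (1 - 1/2) * \<bar>h x\<bar> powr p)"])
qed

lemma in_Lp_diff: "in_Lp M p g \<Longrightarrow> in_Lp M p h \<Longrightarrow> in_Lp M p (\<lambda>x. g x - h x)"
  using in_Lp_add[of g "\<lambda>x. (-1) * h x"] in_Lp_cmult[of h "-1"] by simp


lemma Lp_norm_add_le_of_bounds:
  assumes g: "in_Lp M p g" and h: "in_Lp M p h"
    and A: "0 < A" "Lp_norm M p g \<le> A" and B: "0 < B" "Lp_norm M p h \<le> B"
  shows "Lp_norm M p (\<lambda>x. g x + h x) \<le> A + B"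
proof -
  define l where "l = A / (A + B)"
  have l: "0 \<le> l" "l \<le> 1" "1 - l = B / (A + B)"
    using A B by (auto simp: l_def field_simps)
  define \<alpha> where "\<alpha> = (A + B) powr p * l / A powr p"
  define \<beta> where "\<beta> = (A + B) powr p * (1 - l) / B powr p"
  have "l * (g x / A) + (1 - l) * (h x / B) = (g x + h x) / (A + B)" for x
    using A B unfolding l(3) by (simp add: l_def add_divide_distrib)
  then have "\<bar>g x + h x\<bar> powr p = (A + B) powr p * \<bar>l * (g x / A) + (1 - l) * (h x / B)\<bar> powr p" for x
    using A B by (simp add: abs_divide powr_divide)
  also have "\<dots> x \<le> (A + B) powr p * (l * \<bar>g x / A\<bar> powr p + (1 - l) * \<bar>h x / B\<bar> powr p)" for x
    using l one_le_p by (intro mult_left_mono abs_convex_comb_powr_le) auto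
  also have "\<dots> x = \<alpha> * \<bar>g x\<bar> powr p + \<beta> * \<bar>h x\<bar> powr p" for x
    using A B by (simp add: \<alpha>_def \<beta>_def abs_divide powr_divide field_simps)
  finally have pointwise: "\<bar>g x + h x\<bar> powr p \<le> \<alpha> * \<bar>g x\<bar> powr p + \<beta> * \<bar>h x\<bar> powr p" for x .
  note integrable = in_Lp_powr_integrable[OF g] in_Lp_powr_integrable[OF h]
  have "mean M (\<lambda>x. \<bar>g x + h x\<bar> powr p) \<le> mean M (\<lambda>x. \<alpha> * \<bar>g x\<bar> powr p + \<beta> * \<bar>h x\<bar> powr p)"
    using in_Lp_powr_integrable[OF in_Lp_add[OF g h]] integrable pointwise
    by (intro mean_mono) auto
  also have "\<dots> = \<alpha> * Lp_norm M p g powr p + \<beta> * Lp_norm M p h powr p"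
    using integrable by (simp add: mean_add mean_cmult Lp_norm_powr)
  also have "\<dots> \<le> \<alpha> * A powr p + \<beta> * B powr p"
    using A B l one_le_p Lp_norm_nonneg
    by (intro add_mono mult_left_mono powr_mono2) (auto simp: \<alpha>_def \<beta>_def)
  also have "\<dots> = (A + B) powr p"
    using A B by (simp add: \<alpha>_def \<beta>_def field_simps)
  finally show ?thesis
    using A B by (simp add: Lp_norm_le_iff)
qed

lemma Lp_norm_triangle:
  assumes "in_Lp M p g" and "in_Lp M p h"
  shows "Lp_norm M p (\<lambda>x. g x + h x) \<le> Lp_norm M p g + Lp_norm M p h"
proof (rule field_le_epsilon)
  fix e :: real
  assume "0 < e"
  then have "Lp_norm M p (\<lambda>x. g x + h x) \<le> (Lp_norm M p g + e / 2) + (Lp_norm M p h + e / 2)"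
    using assms Lp_norm_nonneg by (intro Lp_norm_add_le_of_bounds) (auto simp: add_nonneg_pos)
  then show "Lp_norm M p (\<lambda>x. g x + h x) \<le> Lp_norm M p g + Lp_norm M p h + e"
    by simp
qed

lemma abs_mean_le_Lp_norm:
  assumes g: "in_Lp M p g"
  shows "\<bar>mean M g\<bar> \<le> Lp_norm M p g"
proof -
  define m where "m = mean M (\<lambda>x. \<bar>g x\<bar>)"
  have "\<bar>mean M g\<bar> \<le> m"
    unfolding m_def by (rule abs_mean_le)
  moreover have "m \<le> Lp_norm M p g"
  proof (cases "m \<le> 0")
    case False
    then have "0 < m"
      by simp
    define d where "d = p * m powr (p - 1)"
    have integrable: "integrable M (\<lambda>x. \<bar>g x\<bar>)"
      using in_Lp_integrable[OF g] by simp
    have "m powr p = mean M (\<lambda>x. m powr p + d * (\<bar>g x\<bar> - m))"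
      using integrable by (simp add: mean_add mean_diff mean_cmult m_def)
    also have "\<dots> \<le> mean M (\<lambda>x. \<bar>g x\<bar> powr p)"
      unfolding d_def using integrable in_Lp_powr_integrable[OF g] \<open>0 < m\<close> one_le_p
      by (intro mean_mono powr_ge_tangent) auto
    finally have "m powr p \<le> Lp_norm M p g powr p"
      by (simp add: Lp_norm_powr)
    then show ?thesis
      using powr_less_mono2[of p "Lp_norm M p g" m] one_le_p Lp_norm_nonneg[of g]
      by (meson not_le zero_less_one less_le_trans)
  qed (use Lp_norm_nonneg[of g] in linarith)
  ultimately show ?thesis
    by linarith
qed

lemma in_Lp_iff_centered:
  "in_Lp M p g \<longleftrightarrow> integrable M g \<and> in_Lp M p (\<lambda>x. g x - mean M g)"
proof
  assume "in_Lp M p g"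
  then show "integrable M g \<and> in_Lp M p (\<lambda>x. g x - mean M g)"
    by (simp add: in_Lp_integrable in_Lp_diff in_Lp_const)
next
  assume "integrable M g \<and> in_Lp M p (\<lambda>x. g x - mean M g)"
  then have "in_Lp M p (\<lambda>x. (g x - mean M g) + mean M g)"
    by (intro in_Lp_add in_Lp_const) auto
  then show "in_Lp M p g"
    by simp
qed

lemma mean_osc_add_const:
  "integrable M g \<Longrightarrow> mean_osc M p (\<lambda>x. g x + c) = mean_osc M p g"
  by (simp add: mean_osc_def mean_add)

lemma mean_osc_cmult: "mean_osc M p (\<lambda>x. c * g x) = \<bar>c\<bar> * mean_osc M p g"
  unfolding mean_osc_def mean_cmult
  using Lp_norm_cmult[of c "\<lambda>x. g x - mean M g"] by (simp add: right_diff_distrib)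

lemma mean_osc_triangle:
  assumes "in_Lp M p u" and "in_Lp M p v"
  shows "mean_osc M p (\<lambda>x. u x + v x) \<le> mean_osc M p u + mean_osc M p v"
proof -
  have "(\<lambda>x. u x + v x - mean M (\<lambda>x. u x + v x)) = (\<lambda>x. (u x - mean M u) + (v x - mean M v))"
    using assms by (simp add: mean_add in_Lp_integrable fun_eq_iff)
  then show ?thesis
    unfolding mean_osc_def
    using Lp_norm_triangle[OF in_Lp_diff[OF assms(1) in_Lp_const] in_Lp_diff[OF assms(2) in_Lp_const]]
    by simp
qed

lemma mean_osc_le_Lp_norm_diff:
  assumes "in_Lp M p g"
  shows "mean_osc M p g \<le> 2 * Lp_norm M p (\<lambda>x. g x - c)"
proof -
  let ?h = "\<lambda>x. g x - c"
  have h: "in_Lp M p ?h"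
    using assms by (intro in_Lp_diff in_Lp_const)
  have "mean_osc M p g = Lp_norm M p (\<lambda>x. ?h x + (- mean M ?h))"
    using mean_osc_add_const[OF in_Lp_integrable[OF assms], of "-c"] by (simp add: mean_osc_def)
  also have "\<dots> \<le> Lp_norm M p ?h + \<bar>mean M ?h\<bar>"
    using Lp_norm_triangle[OF h in_Lp_const, of "- mean M ?h"] by (simp add: Lp_norm_const)
  also have "\<dots> \<le> 2 * Lp_norm M p ?h"
    using abs_mean_le_Lp_norm[OF h] by simp
  finally show ?thesis .
qed

lemma mean_osc_le_Lp_norm_diff_2:
  assumes "p = 2" and g: "in_Lp M p g"
  shows "mean_osc M p g \<le> Lp_norm M p (\<lambda>x. g x - c)"
proof -
  define u where "u x = g x - mean M g" for x
  define d where "d = mean M g - c"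
  have u: "in_Lp M p u"
    unfolding u_def using g by (intro in_Lp_diff in_Lp_const)
  have integrable: "integrable M u" "integrable M (\<lambda>x. (u x)\<^sup>2)"
    using in_Lp_integrable[OF u] in_Lp_powr_integrable[OF u] \<open>p = 2\<close> by auto
  have "mean M u = 0"
    unfolding u_def using in_Lp_integrable[OF g] by (simp add: mean_diff)
  then have "mean M (\<lambda>x. (u x)\<^sup>2) \<le> mean M (\<lambda>x. (u x)\<^sup>2 + (2 * d * u x + d\<^sup>2))"
    using integrable by (simp add: mean_add mean_cmult)
  also have "\<dots> = mean M (\<lambda>x. \<bar>g x - c\<bar> powr p)"
    unfolding \<open>p = 2\<close> by (simp add: u_def d_def power2_eq_square algebra_simps)
  finally show ?thesis
    unfolding mean_osc_def Lp_norm_le_iff[OF Lp_norm_nonneg] Lp_norm_powr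
    using \<open>p = 2\<close> by (simp add: u_def)
qed

lemma mean_osc_le_add_Lp_norm:
  assumes "in_Lp M p f" and "in_Lp M p g"
  shows "mean_osc M p f \<le> mean_osc M p g + 2 * Lp_norm M p (\<lambda>x. f x - g x)"
proof -
  have fg: "in_Lp M p (\<lambda>x. f x - g x)"
    using assms by (rule in_Lp_diff)
  have "mean_osc M p f \<le> mean_osc M p g + mean_osc M p (\<lambda>x. f x - g x)"
    using mean_osc_triangle[OF assms(2) fg] by simp
  also have "\<dots> \<le> mean_osc M p g + 2 * Lp_norm M p (\<lambda>x. f x - g x)"
    using mean_osc_le_Lp_norm_diff[OF fg, of 0] by simp
  finally show ?thesis .
qed

lemma Lp_norm_comp_lipschitz_le:
  assumes \<phi>: "1-lipschitz_on UNIV \<phi>" and f: "in_Lp M p f"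
  shows "in_Lp M p (\<lambda>x. \<phi> (f x))" and "Lp_norm M p (\<lambda>x. \<phi> (f x) - \<phi> c) \<le> Lp_norm M p (\<lambda>x. f x - c)"
proof -
  have [measurable]: "\<phi> \<in> borel_measurable borel" "f \<in> borel_measurable M"
    using borel_measurable_continuous_onI[OF lipschitz_on_continuous_on[OF \<phi>]] f
    by (auto simp: in_Lp_def)
  have measurable: "(\<lambda>x. \<phi> (f x) - \<phi> c) \<in> borel_measurable M"
    by measurable
  have bound: "\<bar>\<phi> (f x) - \<phi> c\<bar> \<le> \<bar>f x - c\<bar>" for x
    using lipschitz_onD[OF \<phi>, of "f x" c] by (simp add: dist_real_def)
  have fc: "in_Lp M p (\<lambda>x. f x - c)"
    using f by (intro in_Lp_diff in_Lp_const)
  show "Lp_norm M p (\<lambda>x. \<phi> (f x) - \<phi> c) \<le> Lp_norm M p (\<lambda>x. f x - c)"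
    using measurable bound by (intro Lp_norm_mono[OF fc])
  have "in_Lp M p (\<lambda>x. (\<phi> (f x) - \<phi> c) + \<phi> c)"
    using measurable bound by (intro in_Lp_add in_Lp_const in_Lp_bound[OF fc])
  then show "in_Lp M p (\<lambda>x. \<phi> (f x))"
    by simp
qed

lemma mean_osc_comp_lipschitz_le:
  assumes "1-lipschitz_on UNIV \<phi>" and "in_Lp M p f"
  shows "mean_osc M p (\<lambda>x. \<phi> (f x)) \<le> 2 * mean_osc M p f"
  using mean_osc_le_Lp_norm_diff[OF Lp_norm_comp_lipschitz_le(1)[OF assms], of "\<phi> (mean M f)"]
    Lp_norm_comp_lipschitz_le(2)[OF assms, of "mean M f"]
  by (simp add: mean_osc_def)

lemma mean_osc_comp_lipschitz_le_2:
  assumes "p = 2" and "1-lipschitz_on UNIV \<phi>" and "in_Lp M p f"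
  shows "mean_osc M p (\<lambda>x. \<phi> (f x)) \<le> mean_osc M p f"
  using mean_osc_le_Lp_norm_diff_2[OF \<open>p = 2\<close> Lp_norm_comp_lipschitz_le(1)[OF assms(2,3)], of "\<phi> (mean M f)"]
    Lp_norm_comp_lipschitz_le(2)[OF assms(2,3), of "mean M f"]
  by (simp add: mean_osc_def)

end


section \<open>Truncation\<close>

lemma trunc_eq_clamp: "0 \<le> k \<Longrightarrow> trunc f k = (\<lambda>x. max (- k) (min k (f x)))"
  unfolding trunc_def by (auto simp: fun_eq_iff)

lemma trunc_eq_neg_min_neg_min: "0 \<le> k \<Longrightarrow> trunc f k = (\<lambda>x. - min (- min (f x) k) k)"
  unfolding trunc_def by (auto simp: fun_eq_iff)

lemma trunc_eq_half_diff_abs: "0 \<le> k \<Longrightarrow> trunc f k = (\<lambda>x. (\<bar>f x + k\<bar> - \<bar>f x - k\<bar>) / 2)"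
  unfolding trunc_def by (auto simp: fun_eq_iff abs_if)

lemma trunc_measurable [measurable]:
  assumes [measurable]: "f \<in> borel_measurable M"
  shows "trunc f k \<in> borel_measurable M"
  unfolding trunc_def[abs_def] by measurable

lemma lipschitz_on_clamp: "1-lipschitz_on UNIV (\<lambda>t::real. max (- k) (min k t))"
  by (rule lipschitz_onI) (auto simp: dist_real_def)

lemma lipschitz_on_abs_add: "1-lipschitz_on UNIV (\<lambda>t::real. \<bar>t + d\<bar>)"
  by (rule lipschitz_onI) (auto simp: dist_real_def)

context mean_Lp_space
begin

lemma in_Lp_trunc: "in_Lp M p f \<Longrightarrow> 0 \<le> k \<Longrightarrow> in_Lp M p (trunc f k)"
  using Lp_norm_comp_lipschitz_le(1)[OF lipschitz_on_clamp] by (simp add: trunc_eq_clamp)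

lemma mean_osc_eq_mean_pos_part:
  assumes "p = 1" and "integrable M g"
  shows "mean_osc M p g = 2 * mean M (\<lambda>x. max 0 (mean M g - g x))"
proof -
  have "mean_osc M p g = mean M (\<lambda>x. (g x - mean M g) + 2 * max 0 (mean M g - g x))"
    unfolding mean_osc_def \<open>p = 1\<close> Lp_norm_1
    by (rule arg_cong[where f = "mean M"]) (auto simp: fun_eq_iff max_def)
  also have "\<dots> = mean M (\<lambda>x. g x - mean M g) + 2 * mean M (\<lambda>x. max 0 (mean M g - g x))"
    using assms by (simp add: mean_add mean_cmult)
  also have "mean M (\<lambda>x. g x - mean M g) = 0"
    using assms by (simp add: mean_diff)
  finally show ?thesis
    by simp
qed

lemma mean_osc_min_le:
  assumes "p = 1" and f: "integrable M f"
  shows "mean_osc M p (\<lambda>x. min (f x) k) \<le> mean_osc M p f"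
proof -
  let ?h = "\<lambda>x. min (f x) k"
  have h: "integrable M ?h"
    using f by auto
  have "mean M ?h \<le> mean M f"
    using h f by (auto intro: mean_mono)
  moreover have "mean M ?h \<le> k"
    using mean_mono[OF h integrable_const[of k]] by simp
  ultimately
  have "max 0 (mean M ?h - ?h x) \<le> max 0 (mean M f - f x)" for x
    by (cases "f x \<le> k") auto
  then have "mean M (\<lambda>x. max 0 (mean M ?h - ?h x)) \<le> mean M (\<lambda>x. max 0 (mean M f - f x))"
    using h f by (intro mean_mono) auto
  then show ?thesis
    using mean_osc_eq_mean_pos_part[OF assms(1) h] mean_osc_eq_mean_pos_part[OF assms] by simp
qed

lemma mean_osc_trunc_le:
  assumes "p = 1 \<or> p = 2" and f: "in_Lp M p f" and "0 \<le> k"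
  shows "mean_osc M p (trunc f k) \<le> mean_osc M p f"
proof (cases "p = 1")
  case True
  let ?h = "\<lambda>x. - min (f x) k"
  have f_int: "integrable M f" and h_int: "integrable M ?h"
    using in_Lp_integrable[OF f] by auto
  have "mean_osc M p (trunc f k) = mean_osc M p (\<lambda>x. (- 1) * min (?h x) k)"
    using \<open>0 \<le> k\<close> by (simp add: trunc_eq_neg_min_neg_min)
  also have "\<dots> \<le> mean_osc M p ?h"
    unfolding mean_osc_cmult using mean_osc_min_le[OF True h_int] by simp
  also have "\<dots> = mean_osc M p (\<lambda>x. (- 1) * min (f x) k)"
    by simp
  also have "\<dots> \<le> mean_osc M p f"
    unfolding mean_osc_cmult using mean_osc_min_le[OF True f_int] by simp
  finally show ?thesis .
next
  case False
  then have "p = 2"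
    using assms(1) by simp
  then show ?thesis
    using mean_osc_comp_lipschitz_le_2[OF _ lipschitz_on_clamp f] \<open>0 \<le> k\<close>
    by (simp add: trunc_eq_clamp)
qed

lemma Lp_norm_diff_trunc_tendsto:
  assumes f: "in_Lp M p f"
  shows "((\<lambda>k. Lp_norm M p (\<lambda>x. f x - trunc f k x)) \<longlongrightarrow> 0) at_top"
proof -
  have [measurable]: "f \<in> borel_measurable M"
    using f by (simp add: in_Lp_def)
  have integral_tendsto:
    "((\<lambda>k. integral\<^sup>L M (\<lambda>x. \<bar>f x - trunc f k x\<bar> powr p)) \<longlongrightarrow> integral\<^sup>L M (\<lambda>x. 0)) at_top"
  proof (rule integral_dominated_convergence_at_top[where w = "\<lambda>x. \<bar>f x\<bar> powr p"])
    show "integrable M (\<lambda>x. \<bar>f x\<bar> powr p)"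
      using f by (simp add: in_Lp_def)
    show "AE x in M. ((\<lambda>k. \<bar>f x - trunc f k x\<bar> powr p) \<longlongrightarrow> 0) at_top"
    proof (intro AE_I2 tendsto_eventually)
      fix x
      show "\<forall>\<^sub>F k in at_top. \<bar>f x - trunc f k x\<bar> powr p = 0"
        using eventually_ge_at_top[of "\<bar>f x\<bar>"] by eventually_elim (auto simp: trunc_def)
    qed
    have dominated: "\<bar>f x - trunc f k x\<bar> powr p \<le> \<bar>f x\<bar> powr p" if "0 \<le> k" for x k
      using that one_le_p by (intro powr_mono2) (auto simp: trunc_def)
    show "\<forall>\<^sub>F k in at_top. AE x in M. norm (\<bar>f x - trunc f k x\<bar> powr p) \<le> \<bar>f x\<bar> powr p"
      using eventually_ge_at_top[of "0::real"] by eventually_elim (use dominated in auto)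
  qed simp_all
  have "((\<lambda>k. mean M (\<lambda>x. \<bar>f x - trunc f k x\<bar> powr p)) \<longlongrightarrow> 0) at_top"
    unfolding mean_def using tendsto_divide[OF integral_tendsto tendsto_const, of "measure M (space M)"]
      space_measure_pos
    by simp
  then show ?thesis
    unfolding Lp_norm_def using one_le_p by (intro tendsto_zero_powrI) (auto intro!: always_eventually mean_nonneg)
qed

end


section \<open>Shapes and BMO\<close>

lemma shape_sets_lebesgue: "shape S \<Longrightarrow> S \<in> sets lebesgue"
  unfolding shape_def using borel_open[of S] by (auto simp: sets_completionI_sets)

lemma lebesgue_on_shape:
  fixes g :: "'a::euclidean_space \<Rightarrow> real"
  assumes "shape S"
  shows "emeasure (lebesgue_on S) S = emeasure lebesgue S"
    and "measure (lebesgue_on S) S = measure lebesgue S"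
    and "set_integrable lebesgue S g \<longleftrightarrow> integrable (lebesgue_on S) g"
    and "(LINT x:S|lebesgue. g x) = integral\<^sup>L (lebesgue_on S) g"
proof -
  have S: "S \<inter> space lebesgue \<in> sets lebesgue"
    using shape_sets_lebesgue[OF assms] by simp
  show "emeasure (lebesgue_on S) S = emeasure lebesgue S"
    using emeasure_restrict_space[OF S, of S] by simp
  then show "measure (lebesgue_on S) S = measure lebesgue S"
    by (simp add: measure_def)
  show "set_integrable lebesgue S g \<longleftrightarrow> integrable (lebesgue_on S) g"
    unfolding set_integrable_def by (rule integrable_restrict_space[OF S, symmetric])
  show "(LINT x:S|lebesgue. g x) = integral\<^sup>L (lebesgue_on S) g"
    unfolding set_lebesgue_integral_def by (rule integral_restrict_space[OF S, symmetric])
qed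

lemma mean_Lp_space_lebesgue_on:
  assumes "shape S" and "1 \<le> p"
  shows "mean_Lp_space (lebesgue_on S) p"
proof -
  have emeasure: "emeasure (lebesgue_on S) (space (lebesgue_on S)) = emeasure lebesgue S"
    using lebesgue_on_shape(1)[OF assms(1)] by simp
  have "finite_measure (lebesgue_on S)"
    by (rule finite_measureI)
       (use emeasure assms(1) in \<open>metis shape_def less_top infinity_ennreal_def\<close>)
  moreover have "0 < measure (lebesgue_on S) (space (lebesgue_on S))"
    using assms(1) unfolding measure_def emeasure enn2real_positive_iff shape_def
    by (metis less_top infinity_ennreal_def)
  ultimately show ?thesis
    using assms(2) by (simp add: mean_Lp_space_def mean_Lp_space_axioms_def)
qed

lemma avg_eq_mean: "shape S \<Longrightarrow> avg S g = mean (lebesgue_on S) g"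
  by (simp add: avg_def mean_def lebesgue_on_shape)

lemma osc_eq_mean_osc: "shape S \<Longrightarrow> osc p S g = mean_osc (lebesgue_on S) p g"
  unfolding osc_def avg_def[symmetric] by (simp add: avg_eq_mean mean_osc_def Lp_norm_def)

lemma osc_nonneg: "0 \<le> osc p S g"
  by (simp add: osc_def)

lemma osc_le_BMO_norm: "in_BMO p \<S> g \<Longrightarrow> S \<in> \<S> \<Longrightarrow> osc p S g \<le> BMO_norm p \<S> g"
  unfolding BMO_norm_def in_BMO_def by (auto intro: cSUP_upper)

locale shape_basis =
  fixes \<S> :: "'a::euclidean_space set set" and p :: real
  assumes shape_of_mem: "S \<in> \<S> \<Longrightarrow> shape S"
    and nonempty: "\<S> \<noteq> {}"
    and exponent_ge_1: "1 \<le> p"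
begin

lemma mean_Lp_space_on: "S \<in> \<S> \<Longrightarrow> mean_Lp_space (lebesgue_on S) p"
  using mean_Lp_space_lebesgue_on[OF shape_of_mem exponent_ge_1] .

lemma in_BMO_iff:
  "in_BMO p \<S> g \<longleftrightarrow> (\<forall>S\<in>\<S>. in_Lp (lebesgue_on S) p g) \<and> bdd_above ((\<lambda>S. osc p S g) ` \<S>)"
proof -
  have local_iff: "set_integrable lebesgue S g \<and> set_integrable lebesgue S (\<lambda>x. \<bar>g x - avg S g\<bar> powr p)
      \<longleftrightarrow> in_Lp (lebesgue_on S) p g" if "S \<in> \<S>" for S
  proof -
    interpret mean_Lp_space "lebesgue_on S" p
      using that by (rule mean_Lp_space_on)
    show ?thesis
      unfolding in_Lp_iff_centered[of g] using shape_of_mem[OF that]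
      by (auto simp: in_Lp_def lebesgue_on_shape avg_eq_mean)
  qed
  show ?thesis
    unfolding in_BMO_def by (simp add: local_iff)
qed

lemma in_BMO_imp_in_Lp: "in_BMO p \<S> g \<Longrightarrow> S \<in> \<S> \<Longrightarrow> in_Lp (lebesgue_on S) p g"
  by (simp add: in_BMO_iff)

lemma BMO_norm_le: "(\<And>S. S \<in> \<S> \<Longrightarrow> osc p S g \<le> C) \<Longrightarrow> BMO_norm p \<S> g \<le> C"
  unfolding BMO_norm_def using nonempty by (rule cSUP_least)

lemma BMO_norm_nonneg: "in_BMO p \<S> g \<Longrightarrow> 0 \<le> BMO_norm p \<S> g"
  using nonempty osc_nonneg osc_le_BMO_norm by (metis ex_in_conv order_trans)

lemma in_BMO_of_osc_le:
  assumes f: "in_BMO p \<S> f" and "0 \<le> c"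
    and g: "\<And>S. S \<in> \<S> \<Longrightarrow> in_Lp (lebesgue_on S) p g \<and> osc p S g \<le> c * osc p S f"
  shows "in_BMO p \<S> g" and "BMO_norm p \<S> g \<le> c * BMO_norm p \<S> f"
proof -
  have bound: "osc p S g \<le> c * BMO_norm p \<S> f" if "S \<in> \<S>" for S
    using g[OF that] osc_le_BMO_norm[OF f that] \<open>0 \<le> c\<close>
    by (meson mult_left_mono order_trans)
  then have "bdd_above ((\<lambda>S. osc p S g) ` \<S>)"
    by (rule bdd_aboveI2)
  then show "in_BMO p \<S> g"
    unfolding in_BMO_iff using g by blast
  show "BMO_norm p \<S> g \<le> c * BMO_norm p \<S> f"
    using bound by (rule BMO_norm_le)
qed

lemma in_BMO_comp_lipschitz:
  assumes "1-lipschitz_on UNIV \<phi>" and f: "in_BMO p \<S> f"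
  shows "in_BMO p \<S> (\<lambda>x. \<phi> (f x))" and "BMO_norm p \<S> (\<lambda>x. \<phi> (f x)) \<le> 2 * BMO_norm p \<S> f"
proof -
  have local_bound:
    "in_Lp (lebesgue_on S) p (\<lambda>x. \<phi> (f x)) \<and> osc p S (\<lambda>x. \<phi> (f x)) \<le> 2 * osc p S f"
    if "S \<in> \<S>" for S
  proof -
    interpret mean_Lp_space "lebesgue_on S" p
      using that by (rule mean_Lp_space_on)
    show ?thesis
      using Lp_norm_comp_lipschitz_le(1) mean_osc_comp_lipschitz_le assms in_BMO_imp_in_Lp that
      by (simp add: osc_eq_mean_osc shape_of_mem)
  qed
  show "in_BMO p \<S> (\<lambda>x. \<phi> (f x))"
    by (rule in_BMO_of_osc_le(1)[OF f _ local_bound]) simp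
  show "BMO_norm p \<S> (\<lambda>x. \<phi> (f x)) \<le> 2 * BMO_norm p \<S> f"
    by (rule in_BMO_of_osc_le(2)[OF f _ local_bound]) simp
qed

lemma in_BMO_add_const:
  assumes f: "in_BMO p \<S> f"
  shows "in_BMO p \<S> (\<lambda>x. f x + d)" and "BMO_norm p \<S> (\<lambda>x. f x + d) = BMO_norm p \<S> f"
proof -
  have osc_eq: "in_Lp (lebesgue_on S) p (\<lambda>x. f x + d) \<and> osc p S (\<lambda>x. f x + d) = osc p S f"
    if "S \<in> \<S>" for S
  proof -
    interpret mean_Lp_space "lebesgue_on S" p
      using that by (rule mean_Lp_space_on)
    show ?thesis
      using in_BMO_imp_in_Lp[OF f that]
      by (simp add: osc_eq_mean_osc shape_of_mem that in_Lp_add in_Lp_const mean_osc_add_const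
          in_Lp_integrable)
  qed
  then show "in_BMO p \<S> (\<lambda>x. f x + d)"
    by (intro in_BMO_of_osc_le(1)[OF f zero_le_one]) simp
  show "BMO_norm p \<S> (\<lambda>x. f x + d) = BMO_norm p \<S> f"
    unfolding BMO_norm_def using osc_eq by simp
qed

lemma BMO_norm_abs_le_c_abs:
  assumes g: "in_BMO p \<S> g"
  shows "BMO_norm p \<S> (\<lambda>x. \<bar>g x\<bar>) \<le> c_abs p \<S> * BMO_norm p \<S> g"
proof -
  define C where "C = {c. \<forall>f. in_BMO p \<S> f \<longrightarrow>
       in_BMO p \<S> (\<lambda>x. \<bar>f x\<bar>) \<and> BMO_norm p \<S> (\<lambda>x. \<bar>f x\<bar>) \<le> c * BMO_norm p \<S> f}"
  have "2 \<in> C"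
    unfolding C_def using in_BMO_comp_lipschitz[OF lipschitz_on_abs_add[of 0]] by simp
  have bound: "BMO_norm p \<S> (\<lambda>x. \<bar>g x\<bar>) \<le> c * BMO_norm p \<S> g" if "c \<in> C" for c
    using that g by (simp add: C_def)
  show ?thesis
  proof (cases "BMO_norm p \<S> g = 0")
    case True
    then show ?thesis
      using bound[OF \<open>2 \<in> C\<close>] by simp
  next
    case False
    then have pos: "0 < BMO_norm p \<S> g"
      using BMO_norm_nonneg[OF g] by simp
    have "BMO_norm p \<S> (\<lambda>x. \<bar>g x\<bar>) / BMO_norm p \<S> g \<le> Inf C"
      using \<open>2 \<in> C\<close> bound pos by (intro cInf_greatest) (auto simp: divide_le_eq)
    then show ?thesis
      using pos by (simp add: c_abs_def C_def[symmetric] divide_le_eq)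
  qed
qed

lemma in_BMO_trunc: "in_BMO p \<S> f \<Longrightarrow> 0 \<le> k \<Longrightarrow> in_BMO p \<S> (trunc f k)"
  using in_BMO_comp_lipschitz(1)[OF lipschitz_on_clamp] by (simp add: trunc_eq_clamp)

lemma BMO_norm_trunc_le_2:
  "in_BMO p \<S> f \<Longrightarrow> 0 \<le> k \<Longrightarrow> BMO_norm p \<S> (trunc f k) \<le> 2 * BMO_norm p \<S> f"
  using in_BMO_comp_lipschitz(2)[OF lipschitz_on_clamp] by (simp add: trunc_eq_clamp)

lemma BMO_norm_trunc_le_c_abs:
  assumes f: "in_BMO p \<S> f" and "0 \<le> k"
  shows "BMO_norm p \<S> (trunc f k) \<le> c_abs p \<S> * BMO_norm p \<S> f"
proof (rule BMO_norm_le)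
  fix S
  assume S: "S \<in> \<S>"
  interpret mean_Lp_space "lebesgue_on S" p
    using S by (rule mean_Lp_space_on)
  let ?u = "\<lambda>d x. \<bar>f x + d\<bar>"
  have u: "in_BMO p \<S> (?u d)" for d
    using in_BMO_comp_lipschitz(1)[OF lipschitz_on_abs_add f] .
  have u_norm: "BMO_norm p \<S> (?u d) \<le> c_abs p \<S> * BMO_norm p \<S> f" for d
    using BMO_norm_abs_le_c_abs[OF in_BMO_add_const(1)[OF f]] in_BMO_add_const(2)[OF f] by simp
  have "trunc f k = (\<lambda>x. (1 / 2) * ?u k x + (- 1 / 2) * ?u (- k) x)"
    using \<open>0 \<le> k\<close> by (simp add: trunc_eq_half_diff_abs fun_eq_iff field_simps)
  then have "osc p S (trunc f k)
      = mean_osc (lebesgue_on S) p (\<lambda>x. (1 / 2) * ?u k x + (- 1 / 2) * ?u (- k) x)"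
    by (simp only: osc_eq_mean_osc[OF shape_of_mem[OF S]])
  also have "\<dots> \<le> mean_osc (lebesgue_on S) p (\<lambda>x. (1 / 2) * ?u k x)
        + mean_osc (lebesgue_on S) p (\<lambda>x. (- 1 / 2) * ?u (- k) x)"
    by (intro mean_osc_triangle in_Lp_cmult in_BMO_imp_in_Lp[OF u S])
  also have "\<dots> = (osc p S (?u k) + osc p S (?u (- k))) / 2"
    unfolding mean_osc_cmult using S by (simp add: osc_eq_mean_osc shape_of_mem)
  also have "\<dots> \<le> (BMO_norm p \<S> (?u k) + BMO_norm p \<S> (?u (- k))) / 2"
    using osc_le_BMO_norm[OF u[of k] S] osc_le_BMO_norm[OF u[of "- k"] S] by simp
  also have "\<dots> \<le> c_abs p \<S> * BMO_norm p \<S> f"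
    using u_norm[of k] u_norm[of "- k"] by simp
  finally show "osc p S (trunc f k) \<le> c_abs p \<S> * BMO_norm p \<S> f" .
qed

lemma BMO_norm_trunc_le_min:
  assumes f: "in_BMO p \<S> f" and "0 \<le> k"
  shows "BMO_norm p \<S> (trunc f k) \<le> min 2 (((1 + c_abs p \<S>) / 2) ^ 2) * BMO_norm p \<S> f"
proof -
  define c where "c = c_abs p \<S>"
  have "((1 + c) / 2) ^ 2 - c = ((c - 1) / 2) ^ 2"
    by (simp add: power2_eq_square field_simps)
  then have "c \<le> ((1 + c) / 2) ^ 2"
    using zero_le_power2[of "(c - 1) / 2"] by linarith
  then have "c * BMO_norm p \<S> f \<le> ((1 + c) / 2) ^ 2 * BMO_norm p \<S> f"
    using BMO_norm_nonneg[OF f] by (rule mult_right_mono)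
  then show ?thesis
    using BMO_norm_trunc_le_c_abs[OF assms] BMO_norm_trunc_le_2[OF assms]
    by (auto simp: c_def min_def)
qed

lemma BMO_norm_trunc_le:
  assumes "p = 1 \<or> p = 2" and f: "in_BMO p \<S> f" and "0 \<le> k"
  shows "BMO_norm p \<S> (trunc f k) \<le> BMO_norm p \<S> f"
proof -
  have local_bound: "in_Lp (lebesgue_on S) p (trunc f k) \<and> osc p S (trunc f k) \<le> 1 * osc p S f"
    if "S \<in> \<S>" for S
  proof -
    interpret mean_Lp_space "lebesgue_on S" p
      using that by (rule mean_Lp_space_on)
    show ?thesis
      using in_BMO_imp_in_Lp[OF f that] assms
      by (simp add: in_Lp_trunc mean_osc_trunc_le osc_eq_mean_osc shape_of_mem that)
  qed
  show ?thesis
    using in_BMO_of_osc_le(2)[OF f zero_le_one local_bound] by simp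
qed

lemma BMO_norm_trunc_tendsto:
  assumes "p = 1 \<or> p = 2" and f: "in_BMO p \<S> f"
  shows "((\<lambda>k. BMO_norm p \<S> (trunc f k)) \<longlongrightarrow> BMO_norm p \<S> f) at_top"
proof (rule order_tendstoI)
  fix a
  assume "BMO_norm p \<S> f < a"
  show "\<forall>\<^sub>F k in at_top. BMO_norm p \<S> (trunc f k) < a"
    using eventually_ge_at_top[of "0::real"]
    by eventually_elim (use BMO_norm_trunc_le[OF assms] \<open>BMO_norm p \<S> f < a\<close> in fastforce)
next
  fix a
  assume "a < BMO_norm p \<S> f"
  then obtain S where S: "S \<in> \<S>" and "a < osc p S f"
    using f nonempty unfolding BMO_norm_def in_BMO_def by (auto simp: less_cSUP_iff)
  interpret mean_Lp_space "lebesgue_on S" p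
    using S by (rule mean_Lp_space_on)
  have fS: "in_Lp (lebesgue_on S) p f"
    using in_BMO_imp_in_Lp[OF f S] .
  have "\<forall>\<^sub>F k in at_top. Lp_norm (lebesgue_on S) p (\<lambda>x. f x - trunc f k x) < (osc p S f - a) / 2"
    using order_tendstoD(2)[OF Lp_norm_diff_trunc_tendsto[OF fS], of "(osc p S f - a) / 2"]
      \<open>a < osc p S f\<close>
    by simp
  then show "\<forall>\<^sub>F k in at_top. a < BMO_norm p \<S> (trunc f k)"
    using eventually_ge_at_top[of "0::real"]
  proof eventually_elim
    case (elim k)
    have "osc p S f \<le> osc p S (trunc f k) + 2 * Lp_norm (lebesgue_on S) p (\<lambda>x. f x - trunc f k x)"
      using mean_osc_le_add_Lp_norm[OF fS in_Lp_trunc[OF fS]] elim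
      by (simp add: osc_eq_mean_osc shape_of_mem S)
    moreover have "osc p S (trunc f k) \<le> BMO_norm p \<S> (trunc f k)"
      using osc_le_BMO_norm[OF in_BMO_trunc[OF f] S] elim by simp
    moreover have "2 * Lp_norm (lebesgue_on S) p (\<lambda>x. f x - trunc f k x) < osc p S f - a"
      using elim by simp
    ultimately show ?case
      by linarith
  qed
qed

end

theorem corollary6p5:
  fixes \<Omega> :: "'a::euclidean_space set" and \<S> :: "'a set set"
    and p :: real and f :: "'a \<Rightarrow> real"
  assumes "domain \<Omega>" and "basis_of_shapes \<S> \<Omega>" and "1 \<le> p"
    and "in_BMO p \<S> f"
  shows "(\<forall>k>0. in_BMO p \<S> (trunc f k) \<and>
            BMO_norm p \<S> (trunc f k) \<le>
              (if p = 1 \<or> p = 2 then 1 else min 2 (((1 + c_abs p \<S>) / 2) ^ 2))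
                * BMO_norm p \<S> f)
       \<and> ((p = 1 \<or> p = 2) \<longrightarrow>
            ((\<lambda>k. BMO_norm p \<S> (trunc f k)) \<longlongrightarrow> BMO_norm p \<S> f) at_top)"
proof -
  interpret shape_basis \<S> p
    using assms(1-3) by unfold_locales (auto simp: domain_def basis_of_shapes_def)
  show ?thesis
    using assms(4) in_BMO_trunc BMO_norm_trunc_le BMO_norm_trunc_le_min BMO_norm_trunc_tendsto
    by simp
qed

end
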